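(* Let $G$ be a countable discrete group and let $\theta=(\{X_t\}_{t\in G},\{h_t\}_{t\in G})$ be a free topological partial action of $G$ on a $\sigma$-compact Hausdorff space $X$ such that every $X_t$ is $\sigma$-compact. Let $$R=\{(x,h_t(x)) : t\in G,\ x\in X_{t^{-1}}\}\subseteq X\times X,$$ equipped with the topology transported from the product topology of $X\times G$ ($G$ discrete) via the injective map $(x,h_t(x))\mapsto (x,t)$. Then $R$ is an equivalence relation on $X$, and with this topology it is an étale equivalence relation.
   Context: A topological partial action of $G$ on $X$ is a pair $(\{X_t\}_{t\in G},\{h_t\}_{t\in G})$ where each $X_t\subseteq X$ is open, each $h_t:X_{t^{-1}}\to X_t$ is a homeomorphism, and: (1) $X_e=X$ and $h_e=\mathrm{id}_X$; (2) $h_t(X_{t^{-1}}\cap X_s)=X_t\cap X_{ts}$ for all $s,t$; (3) $h_t(h_s(x))=h_{ts}(x)$ for $x\in X_{s^{-1}}\cap X_{s^{-1}t^{-1}}$. It is free if $h_t(x)=x$ for some $x\in X_{t^{-1}}$ implies $t=e$; freeness guarantees that for each $(x,y)\in R$ there is a unique $t$ with $y=h_t(x)$, so the map $(x,h_t(x))\mapsto(x,t)$ is injective. Thus a sequence $(x_n,h_{t_n}(x_n))$ converges to $(x,h_t(x))$ iff $x_n\to x$ in $X$ and $t_n=t$ eventually. An étale equivalence relation is an equivalence relation $R\subseteq X\times X$ with a topology such that $R$ is $\sigma$-compact, the diagonal $\{(x,x):x\in X\}$ is open in $R$, and every $(x,y)\in R$ has a neighbourhood $U$ in $R$ on which the range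 map $r(x,y)=x$ and the source map $s(x,y)=y$ restrict to homeomorphisms onto open subsets of $X$. *)

theory Defs
  imports "HOL-Analysis.Analysis" "HOL-Algebra.Group"
begin

definition sigma_compact_in :: "'a topology \<Rightarrow> 'a set \<Rightarrow> bool" where
  "sigma_compact_in T S \<longleftrightarrow>
     (\<exists>K :: nat \<Rightarrow> 'a set. (\<forall>n. compactin T (K n)) \<and> S = (\<Union>n. K n))"

definition topological_partial_action ::
  "('g, 'b) monoid_scheme \<Rightarrow> 'a topology \<Rightarrow> ('g \<Rightarrow> 'a set) \<Rightarrow> ('g \<Rightarrow> 'a \<Rightarrow> 'a) \<Rightarrow> bool" where
  "topological_partial_action G X Xs h \<longleftrightarrow>
     group G \<and>
     (\<forall>t\<in>carrier G. openin X (Xs t)) \<and>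
     (\<forall>t\<in>carrier G. homeomorphic_map (subtopology X (Xs (inv\<^bsub>G\<^esub> t))) (subtopology X (Xs t)) (h t)) \<and>
     Xs \<one>\<^bsub>G\<^esub> = topspace X \<and>
     (\<forall>x\<in>topspace X. h \<one>\<^bsub>G\<^esub> x = x) \<and>
     (\<forall>s\<in>carrier G. \<forall>t\<in>carrier G.
        h t ` (Xs (inv\<^bsub>G\<^esub> t) \<inter> Xs s) = Xs t \<inter> Xs (t \<otimes>\<^bsub>G\<^esub> s)) \<and>
     (\<forall>s\<in>carrier G. \<forall>t\<in>carrier G.
        \<forall>x \<in> Xs (inv\<^bsub>G\<^esub> s) \<inter> Xs (inv\<^bsub>G\<^esub> s \<otimes>\<^bsub>G\<^esub> inv\<^bsub>G\<^esub> t).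
          h t (h s x) = h (t \<otimes>\<^bsub>G\<^esub> s) x)"

definition free_partial_action ::
  "('g, 'b) monoid_scheme \<Rightarrow> ('g \<Rightarrow> 'a set) \<Rightarrow> ('g \<Rightarrow> 'a \<Rightarrow> 'a) \<Rightarrow> bool" where
  "free_partial_action G Xs h \<longleftrightarrow>
     (\<forall>t\<in>carrier G. \<forall>x\<in>Xs (inv\<^bsub>G\<^esub> t). h t x = x \<longrightarrow> t = \<one>\<^bsub>G\<^esub>)"

definition orbit_rel ::
  "('g, 'b) monoid_scheme \<Rightarrow> ('g \<Rightarrow> 'a set) \<Rightarrow> ('g \<Rightarrow> 'a \<Rightarrow> 'a) \<Rightarrow> ('a \<times> 'a) set" where
  "orbit_rel G Xs h = {(x, h t x) | t x. t \<in> carrier G \<and> x \<in> Xs (inv\<^bsub>G\<^esub> t)}"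

definition action_domain ::
  "('g, 'b) monoid_scheme \<Rightarrow> ('g \<Rightarrow> 'a set) \<Rightarrow> ('a \<times> 'g) set" where
  "action_domain G Xs = {(x, t). t \<in> carrier G \<and> x \<in> Xs (inv\<^bsub>G\<^esub> t)}"

definition orbit_rel_topology ::
  "('g, 'b) monoid_scheme \<Rightarrow> 'a topology \<Rightarrow> ('g \<Rightarrow> 'a set) \<Rightarrow> ('g \<Rightarrow> 'a \<Rightarrow> 'a) \<Rightarrow> ('a \<times> 'a) topology" where
  "orbit_rel_topology G X Xs h = topology (\<lambda>U.
      U \<subseteq> orbit_rel G Xs h \<and>
      openin (subtopology (prod_topology X (discrete_topology (carrier G))) (action_domain G Xs))
             {p \<in> action_domain G Xs. (fst p, h (snd p) (fst p)) \<in> U})"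

definition etale_equivalence_relation ::
  "'a topology \<Rightarrow> ('a \<times> 'a) set \<Rightarrow> ('a \<times> 'a) topology \<Rightarrow> bool" where
  "etale_equivalence_relation X R TR \<longleftrightarrow>
     equiv (topspace X) R \<and>
     topspace TR = R \<and>
     sigma_compact_in TR R \<and>
     openin TR {(x, x) | x. x \<in> topspace X} \<and>
     (\<forall>p\<in>R. \<exists>U. openin TR U \<and> p \<in> U \<and>
        openin X (fst ` U) \<and> homeomorphic_map (subtopology TR U) (subtopology X (fst ` U)) fst \<and>
        openin X (snd ` U) \<and> homeomorphic_map (subtopology TR U) (subtopology X (snd ` U)) snd)"

end

theory Submission
  imports Defs
begin

text \<open>By freeness each point of R is (x, h t x) for exactly one t, so R is the disjoint union
  of the graphs of the maps h t : Xs (inv t) \<rightarrow> Xs t, and the transported topology makes each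
  graph an open subset of R that the first projection maps homeomorphically onto the open set
  Xs (inv t); the second projection is this homeomorphism followed by h t. The diagonal is the
  graph of h \<one>, and R is \<sigma>-compact as a countable union of continuous images of the
  \<sigma>-compact sets Xs (inv t).\<close>

lemma sigma_compact_in_iff_countable_Union:
  "sigma_compact_in T S \<longleftrightarrow> (\<exists>\<K>. countable \<K> \<and> (\<forall>K\<in>\<K>. compactin T K) \<and> S = \<Union>\<K>)"
proof
  assume "sigma_compact_in T S"
  then obtain K :: "nat \<Rightarrow> _" where "\<forall>n. compactin T (K n)" "S = (\<Union>n. K n)"
    unfolding sigma_compact_in_def by blast
  then show "\<exists>\<K>. countable \<K> \<and> (\<forall>K\<in>\<K>. compactin T K) \<and> S = \<Union>\<K>"
    by (intro exI[of _ "range K"]) auto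
next
  assume "\<exists>\<K>. countable \<K> \<and> (\<forall>K\<in>\<K>. compactin T K) \<and> S = \<Union>\<K>"
  then obtain \<K> where \<K>: "countable \<K>" "\<forall>K\<in>\<K>. compactin T K" "S = \<Union>\<K>"
    by blast
  show "sigma_compact_in T S"
  proof (cases "\<K> = {}")
    case True
    then show ?thesis
      unfolding sigma_compact_in_def using \<K> by (intro exI[of _ "\<lambda>_. {}"]) auto
  next
    case False
    then have "\<forall>n. compactin T (from_nat_into \<K> n)"
      using \<K>(2) by (simp add: from_nat_into)
    moreover have "S = (\<Union>n. from_nat_into \<K> n)"
      using False \<K>(1,3) by simp
    ultimately show ?thesis
      unfolding sigma_compact_in_def by blast
  qed
qed

lemma sigma_compact_in_UN:
  assumes "countable I" and "\<forall>i\<in>I. sigma_compact_in T (S i)"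
  shows "sigma_compact_in T (\<Union>i\<in>I. S i)"
proof -
  have "\<forall>i\<in>I. \<exists>\<K>. countable \<K> \<and> (\<forall>K\<in>\<K>. compactin T K) \<and> S i = \<Union>\<K>"
    using assms(2) unfolding sigma_compact_in_iff_countable_Union .
  then obtain \<K> where \<K>: "\<forall>i\<in>I. countable (\<K> i) \<and> (\<forall>K\<in>\<K> i. compactin T K) \<and> S i = \<Union>(\<K> i)"
    by (metis bchoice)
  have "countable (\<Union>i\<in>I. \<K> i)"
    using assms(1) \<K> by (simp add: countable_UN)
  moreover have "\<forall>K\<in>(\<Union>i\<in>I. \<K> i). compactin T K"
    using \<K> by blast
  moreover have "(\<Union>i\<in>I. S i) = \<Union>(\<Union>i\<in>I. \<K> i)"
    using \<K> by auto
  ultimately show ?thesis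
    unfolding sigma_compact_in_iff_countable_Union by (intro exI[of _ "\<Union>i\<in>I. \<K> i"]) simp
qed

lemma sigma_compact_in_image:
  assumes "continuous_map T U f" and "sigma_compact_in T S"
  shows "sigma_compact_in U (f ` S)"
proof -
  obtain K :: "nat \<Rightarrow> _" where "\<forall>n. compactin T (K n)" and "S = (\<Union>n. K n)"
    using assms(2) unfolding sigma_compact_in_def by blast
  then have "\<forall>n. compactin U (f ` K n)" and "f ` S = (\<Union>n. f ` K n)"
    using image_compactin[OF _ assms(1)] by auto
  then show ?thesis
    unfolding sigma_compact_in_def by (intro exI[of _ "\<lambda>n. f ` K n"]) simp
qed

lemma sigma_compact_in_subtopology:
  assumes "sigma_compact_in T S" and "S \<subseteq> A"
  shows "sigma_compact_in (subtopology T A) S"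
proof -
  obtain K :: "nat \<Rightarrow> _" where K: "\<forall>n. compactin T (K n)" "S = (\<Union>n. K n)"
    using assms(1) unfolding sigma_compact_in_def by blast
  then have "\<forall>n. compactin (subtopology T A) (K n)"
    using assms(2) by (auto simp: compactin_subtopology)
  then show ?thesis
    unfolding sigma_compact_in_def using K(2) by blast
qed

lemma openin_prod_topology_discrete:
  "openin (prod_topology X (discrete_topology D)) S \<longleftrightarrow>
     S \<subseteq> topspace X \<times> D \<and> (\<forall>s\<in>D. openin X {y. (y, s) \<in> S})"
proof
  assume S: "openin (prod_topology X (discrete_topology D)) S"
  have "S \<subseteq> topspace X \<times> D"
    using openin_subset[OF S] by simp
  moreover have "openin X {y. (y, s) \<in> S}" if "s \<in> D" for s
  proof -
    have "openin (prod_topology X (discrete_topology D)) (topspace X \<times> {s})"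
      using \<open>s \<in> D\<close> by (simp add: openin_prod_Times_iff)
    then have "openin (prod_topology X (discrete_topology D)) (S \<inter> topspace X \<times> {s})"
      using S by (rule openin_Int[rotated])
    also have "S \<inter> topspace X \<times> {s} = {y. (y, s) \<in> S} \<times> {s}"
      using \<open>S \<subseteq> topspace X \<times> D\<close> by auto
    finally show ?thesis
      by (auto simp: openin_prod_Times_iff)
  qed
  ultimately show "S \<subseteq> topspace X \<times> D \<and> (\<forall>s\<in>D. openin X {y. (y, s) \<in> S})"
    by blast
next
  assume S: "S \<subseteq> topspace X \<times> D \<and> (\<forall>s\<in>D. openin X {y. (y, s) \<in> S})"
  then have "(\<Union>s\<in>D. {y. (y, s) \<in> S} \<times> {s}) = S"
    by blast
  moreover have "openin (prod_topology X (discrete_topology D)) ({y. (y, s) \<in> S} \<times> {s})"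
    if "s \<in> D" for s
    using S that by (simp add: openin_prod_Times_iff)
  then have "openin (prod_topology X (discrete_topology D)) (\<Union>s\<in>D. {y. (y, s) \<in> S} \<times> {s})"
    by (intro openin_Union) blast
  ultimately show "openin (prod_topology X (discrete_topology D)) S"
    by simp
qed

lemma istopology_pullback:
  "istopology (\<lambda>U. U \<subseteq> A \<and> openin T {p \<in> B. g p \<in> U})"
proof -
  have "{p \<in> B. g p \<in> S \<inter> U} = {p \<in> B. g p \<in> S} \<inter> {p \<in> B. g p \<in> U}" for S U
    by auto
  moreover have "{p \<in> B. g p \<in> \<Union>\<U>} = (\<Union>U\<in>\<U>. {p \<in> B. g p \<in> U})" for \<U>
    by auto
  ultimately show ?thesis
    unfolding istopology_def by (auto intro: openin_Int openin_Union)
qed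

locale top_partial_action =
  fixes G :: "('g, 'b) monoid_scheme" (structure) and X :: "'a topology"
    and Xs :: "'g \<Rightarrow> 'a set" and h :: "'g \<Rightarrow> 'a \<Rightarrow> 'a"
  assumes is_partial_action: "topological_partial_action G X Xs h"
begin

sublocale group G
  using is_partial_action by (simp add: topological_partial_action_def)

lemma openin_domain: "t \<in> carrier G \<Longrightarrow> openin X (Xs t)"
  using is_partial_action by (simp add: topological_partial_action_def)

lemma domain_subset: "t \<in> carrier G \<Longrightarrow> Xs t \<subseteq> topspace X"
  using openin_domain openin_subset by blast

lemma homeomorphic_map_action:
  "t \<in> carrier G \<Longrightarrow> homeomorphic_map (subtopology X (Xs (inv t))) (subtopology X (Xs t)) (h t)"
  using is_partial_action by (simp add: topological_partial_action_def)

lemma domain_one: "Xs \<one> = topspace X"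
  and action_one: "x \<in> topspace X \<Longrightarrow> h \<one> x = x"
  using is_partial_action by (simp_all add: topological_partial_action_def)

lemma action_image_Int:
  "s \<in> carrier G \<Longrightarrow> t \<in> carrier G \<Longrightarrow> h t ` (Xs (inv t) \<inter> Xs s) = Xs t \<inter> Xs (t \<otimes> s)"
  using is_partial_action by (simp add: topological_partial_action_def)

lemma action_action:
  "s \<in> carrier G \<Longrightarrow> t \<in> carrier G \<Longrightarrow> x \<in> Xs (inv s) \<Longrightarrow> x \<in> Xs (inv s \<otimes> inv t) \<Longrightarrow>
    h t (h s x) = h (t \<otimes> s) x"
  using is_partial_action by (simp add: topological_partial_action_def)

lemma action_image: "t \<in> carrier G \<Longrightarrow> h t ` Xs (inv t) = Xs t"
  using homeomorphic_imp_surjective_map[OF homeomorphic_map_action] domain_subset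
  by (simp add: Int_absorb1)

lemma action_in_domain: "t \<in> carrier G \<Longrightarrow> x \<in> Xs (inv t) \<Longrightarrow> h t x \<in> Xs t"
  using action_image by blast

lemma action_inverse:
  assumes t: "t \<in> carrier G" and x: "x \<in> Xs (inv t)"
  shows "h (inv t) (h t x) = x"
proof -
  have "x \<in> topspace X"
    using domain_subset x t by blast
  then have "x \<in> Xs (inv t \<otimes> inv (inv t))"
    using t domain_one by simp
  then have "h (inv t) (h t x) = h (inv t \<otimes> t) x"
    using action_action[of t "inv t" x] t x by simp
  also have "\<dots> = x"
    using t \<open>x \<in> topspace X\<close> action_one by simp
  finally show ?thesis .
qed

lemma action_compose:
  assumes s: "s \<in> carrier G" and t: "t \<in> carrier G"
    and x: "x \<in> Xs (inv t)" and y: "h t x \<in> Xs (inv s)"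
  shows "x \<in> Xs (inv (s \<otimes> t))" and "h s (h t x) = h (s \<otimes> t) x"
proof -
  have "h t x \<in> Xs (inv (inv t)) \<inter> Xs (inv s)"
    using action_in_domain[OF t x] y t by simp
  then have "h (inv t) (h t x) \<in> Xs (inv t) \<inter> Xs (inv t \<otimes> inv s)"
    using action_image_Int[of "inv s" "inv t"] s t by blast
  then have x': "x \<in> Xs (inv t \<otimes> inv s)"
    using action_inverse[OF t x] by simp
  then show "x \<in> Xs (inv (s \<otimes> t))"
    using s t by (simp add: inv_mult_group)
  show "h s (h t x) = h (s \<otimes> t) x"
    using action_action[OF t s x x'] .
qed

abbreviation R where "R \<equiv> orbit_rel G Xs h"
abbreviation TR where "TR \<equiv> orbit_rel_topology G X Xs h"

lemma orbit_rel_equiv: "equiv (topspace X) R"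
proof (rule equivI)
  show "R \<subseteq> topspace X \<times> topspace X"
    unfolding orbit_rel_def using domain_subset action_in_domain by blast
  show "refl_on (topspace X) R"
  proof
    fix x assume "x \<in> topspace X"
    then have "(x, h \<one> x) \<in> R"
      unfolding orbit_rel_def using domain_one by force
    then show "(x, x) \<in> R"
      using action_one \<open>x \<in> topspace X\<close> by simp
  qed
  show "sym R"
  proof
    fix x y assume "(x, y) \<in> R"
    then obtain t where t: "t \<in> carrier G" "x \<in> Xs (inv t)" "y = h t x"
      unfolding orbit_rel_def by blast
    then have "y \<in> Xs (inv (inv t))" and "x = h (inv t) y"
      using action_in_domain action_inverse by simp_all
    then show "(y, x) \<in> R"
      unfolding orbit_rel_def using t(1) inv_closed by blast
  qed
  show "trans R"
  proof
    fix x y z assume "(x, y) \<in> R" "(y, z) \<in> R"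
    then obtain s t where t: "t \<in> carrier G" "x \<in> Xs (inv t)" "y = h t x"
      and s: "s \<in> carrier G" "y \<in> Xs (inv s)" "z = h s y"
      unfolding orbit_rel_def by blast
    then show "(x, z) \<in> R"
      unfolding orbit_rel_def using action_compose[OF s(1) t(1,2)] m_closed by blast
  qed
qed

lemma openin_orbit_rel_topology:
  "openin TR W \<longleftrightarrow> W \<subseteq> R \<and> (\<forall>s\<in>carrier G. openin X {y \<in> Xs (inv s). (y, h s y) \<in> W})"
proof -
  let ?P = "prod_topology X (discrete_topology (carrier G))"
  let ?D = "action_domain G Xs"
  let ?W = "{p \<in> ?D. (fst p, h (snd p) (fst p)) \<in> W}"
  have D_subset: "?D \<subseteq> topspace X \<times> carrier G"
    unfolding action_domain_def using domain_subset by auto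
  have "{y. (y, s) \<in> ?D} = Xs (inv s)" if "s \<in> carrier G" for s
    using that unfolding action_domain_def by simp
  then have D_open: "openin ?P ?D"
    unfolding openin_prod_topology_discrete using D_subset openin_domain by simp
  have "{y. (y, s) \<in> ?W} = {y \<in> Xs (inv s). (y, h s y) \<in> W}" if "s \<in> carrier G" for s
    using that unfolding action_domain_def by auto
  then have "openin (subtopology ?P ?D) ?W \<longleftrightarrow>
      (\<forall>s\<in>carrier G. openin X {y \<in> Xs (inv s). (y, h s y) \<in> W})"
    unfolding openin_open_subtopology[OF D_open] openin_prod_topology_discrete
    using D_subset by auto
  moreover have "openin TR W \<longleftrightarrow> W \<subseteq> R \<and> openin (subtopology ?P ?D) ?W"
    unfolding orbit_rel_topology_def
    using topology_inverse'[OF istopology_pullback[of R _ ?D "\<lambda>p. (fst p, h (snd p) (fst p))"]]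
    by simp
  ultimately show ?thesis
    by simp
qed

lemma topspace_orbit_rel_topology: "topspace TR = R"
proof
  show "topspace TR \<subseteq> R"
    using openin_orbit_rel_topology[of "topspace TR"] by simp
  have "{y \<in> Xs (inv s). (y, h s y) \<in> R} = Xs (inv s)" if "s \<in> carrier G" for s
    using that unfolding orbit_rel_def by blast
  then have "openin TR R"
    unfolding openin_orbit_rel_topology using openin_domain by simp
  then show "R \<subseteq> topspace TR"
    by (rule openin_subset)
qed

lemma continuous_map_fst_orbit_rel: "continuous_map TR X fst"
  unfolding continuous_map
proof
  show "fst ` topspace TR \<subseteq> topspace X"
    using orbit_rel_equiv unfolding topspace_orbit_rel_topology equiv_def refl_on_def by auto
  show "\<forall>V. openin X V \<longrightarrow> openin TR {p \<in> topspace TR. fst p \<in> V}"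
  proof (intro allI impI)
    fix V assume "openin X V"
    have "{y \<in> Xs (inv s). (y, h s y) \<in> {p \<in> R. fst p \<in> V}} = Xs (inv s) \<inter> V"
      if "s \<in> carrier G" for s
      using that unfolding orbit_rel_def by auto
    then show "openin TR {p \<in> topspace TR. fst p \<in> V}"
      unfolding topspace_orbit_rel_topology openin_orbit_rel_topology
      using openin_domain \<open>openin X V\<close> by auto
  qed
qed

lemma continuous_map_graph:
  assumes "t \<in> carrier G"
  shows "continuous_map (subtopology X (Xs (inv t))) TR (\<lambda>y. (y, h t y))"
  unfolding continuous_map
proof
  show "(\<lambda>y. (y, h t y)) ` topspace (subtopology X (Xs (inv t))) \<subseteq> topspace TR"
    unfolding topspace_orbit_rel_topology orbit_rel_def using assms by auto
  show "\<forall>U. openin TR U \<longrightarrow>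
      openin (subtopology X (Xs (inv t))) {y \<in> topspace (subtopology X (Xs (inv t))). (y, h t y) \<in> U}"
  proof (intro allI impI)
    fix U assume "openin TR U"
    then have "openin X {y \<in> Xs (inv t). (y, h t y) \<in> U}"
      using assms unfolding openin_orbit_rel_topology by blast
    moreover have "topspace (subtopology X (Xs (inv t))) = Xs (inv t)"
      using domain_subset assms by auto
    ultimately show "openin (subtopology X (Xs (inv t)))
        {y \<in> topspace (subtopology X (Xs (inv t))). (y, h t y) \<in> U}"
      using assms by (simp add: openin_open_subtopology openin_domain)
  qed
qed

lemma homeomorphic_map_fst_graph:
  assumes "t \<in> carrier G"
  shows "homeomorphic_map (subtopology TR ((\<lambda>y. (y, h t y)) ` Xs (inv t)))
           (subtopology X (Xs (inv t))) fst"
proof (rule homeomorphic_maps_imp_map)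
  let ?U = "(\<lambda>y. (y, h t y)) ` Xs (inv t)"
  have "?U \<subseteq> R"
    unfolding orbit_rel_def using assms by blast
  then have U: "topspace (subtopology TR ?U) = ?U"
    by (simp add: topspace_orbit_rel_topology Int_absorb1)
  have A: "topspace (subtopology X (Xs (inv t))) = Xs (inv t)"
    using domain_subset assms by auto
  show "homeomorphic_maps (subtopology TR ?U) (subtopology X (Xs (inv t))) fst (\<lambda>y. (y, h t y))"
    unfolding homeomorphic_maps_def U A
  proof (intro conjI)
    show "continuous_map (subtopology TR ?U) (subtopology X (Xs (inv t))) fst"
      using continuous_map_fst_orbit_rel
      by (auto simp: continuous_map_in_subtopology continuous_map_from_subtopology U)
    show "continuous_map (subtopology X (Xs (inv t))) (subtopology TR ?U) (\<lambda>y. (y, h t y))"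
      using continuous_map_graph[OF assms] by (auto simp: continuous_map_in_subtopology A)
  qed auto
qed

lemma homeomorphic_map_snd_graph:
  assumes "t \<in> carrier G"
  shows "homeomorphic_map (subtopology TR ((\<lambda>y. (y, h t y)) ` Xs (inv t)))
           (subtopology X (Xs t)) snd"
proof (rule homeomorphic_map_eq)
  show "homeomorphic_map (subtopology TR ((\<lambda>y. (y, h t y)) ` Xs (inv t))) (subtopology X (Xs t))
      (h t \<circ> fst)"
    using homeomorphic_map_fst_graph[OF assms] homeomorphic_map_action[OF assms]
    by (rule homeomorphic_map_compose)
  show "(h t \<circ> fst) p = snd p"
    if "p \<in> topspace (subtopology TR ((\<lambda>y. (y, h t y)) ` Xs (inv t)))" for p
    using that by auto
qed

lemma sigma_compact_orbit_rel:
  assumes "countable (carrier G)" and "\<forall>t\<in>carrier G. sigma_compact_in X (Xs t)"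
  shows "sigma_compact_in TR R"
proof -
  have "R = (\<Union>t\<in>carrier G. (\<lambda>y. (y, h t y)) ` Xs (inv t))"
    unfolding orbit_rel_def by blast
  moreover have "sigma_compact_in TR ((\<lambda>y. (y, h t y)) ` Xs (inv t))" if "t \<in> carrier G" for t
  proof (rule sigma_compact_in_image[OF continuous_map_graph[OF that]])
    show "sigma_compact_in (subtopology X (Xs (inv t))) (Xs (inv t))"
      using assms(2) that by (simp add: sigma_compact_in_subtopology)
  qed
  ultimately show ?thesis
    using sigma_compact_in_UN[OF assms(1)] by (metis (no_types, lifting))
qed

end

locale free_top_partial_action = top_partial_action +
  assumes free: "free_partial_action G Xs h"
begin

lemma action_eq_imp_eq:
  assumes s: "s \<in> carrier G" and t: "t \<in> carrier G"
    and ys: "y \<in> Xs (inv s)" and yt: "y \<in> Xs (inv t)" and eq: "h s y = h t y"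
  shows "s = t"
proof -
  have "h s y \<in> Xs (inv (inv t))"
    using eq action_in_domain[OF t yt] t by simp
  note compose = action_compose[OF inv_closed[OF t] s ys this]
  have "h (inv t \<otimes> s) y = y"
    using compose(2) eq action_inverse[OF t yt] by simp
  moreover have "inv t \<otimes> s \<in> carrier G"
    using s t by simp
  ultimately have "inv t \<otimes> s = \<one>"
    using free compose(1) unfolding free_partial_action_def by blast
  then show ?thesis
    using s t by (metis inv_equality inv_inv inv_closed)
qed

lemma slice_graph:
  assumes t: "t \<in> carrier G" and s: "s \<in> carrier G" and V: "V \<subseteq> Xs (inv t)"
  shows "{y \<in> Xs (inv s). (y, h s y) \<in> (\<lambda>y. (y, h t y)) ` V} = (if s = t then V else {})"
  using action_eq_imp_eq[OF s t] V by auto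

lemma openin_graph:
  assumes "t \<in> carrier G" and "openin X V" and "V \<subseteq> Xs (inv t)"
  shows "openin TR ((\<lambda>y. (y, h t y)) ` V)"
  unfolding openin_orbit_rel_topology
proof
  show "(\<lambda>y. (y, h t y)) ` V \<subseteq> R"
    unfolding orbit_rel_def using assms by blast
  show "\<forall>s\<in>carrier G. openin X {y \<in> Xs (inv s). (y, h s y) \<in> (\<lambda>y. (y, h t y)) ` V}"
    using slice_graph[OF assms(1) _ assms(3)] assms(2) by simp
qed

lemma openin_diagonal: "openin TR {(x, x) | x. x \<in> topspace X}"
  unfolding openin_orbit_rel_topology
proof
  show "{(x, x) | x. x \<in> topspace X} \<subseteq> R"
    using orbit_rel_equiv unfolding equiv_def refl_on_def by blast
  have "{y \<in> Xs (inv s). (y, h s y) \<in> {(x, x) | x. x \<in> topspace X}} =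
      (if s = \<one> then topspace X else {})" if "s \<in> carrier G" for s
  proof (cases "s = \<one>")
    case True
    then show ?thesis
      using domain_one action_one by auto
  next
    case False
    then have "h s y \<noteq> y" if "y \<in> Xs (inv s)" for y
      using free \<open>s \<in> carrier G\<close> that unfolding free_partial_action_def by blast
    then show ?thesis
      using False by auto
  qed
  then show "\<forall>s\<in>carrier G. openin X {y \<in> Xs (inv s). (y, h s y) \<in> {(x, x) | x. x \<in> topspace X}}"
    by simp
qed

lemma etale_neighbourhood:
  assumes "p \<in> R"
  shows "\<exists>U. openin TR U \<and> p \<in> U \<and>
    openin X (fst ` U) \<and> homeomorphic_map (subtopology TR U) (subtopology X (fst ` U)) fst \<and>
    openin X (snd ` U) \<and> homeomorphic_map (subtopology TR U) (subtopology X (snd ` U)) snd"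
proof -
  obtain t x where t: "t \<in> carrier G" and x: "x \<in> Xs (inv t)" and p: "p = (x, h t x)"
    using assms unfolding orbit_rel_def by blast
  let ?U = "(\<lambda>y. (y, h t y)) ` Xs (inv t)"
  have "fst ` ?U = Xs (inv t)" and "snd ` ?U = Xs t"
    using action_image[OF t] by (simp_all add: image_image)
  moreover have "openin TR ?U"
    using openin_graph[OF t openin_domain] t by simp
  moreover have "p \<in> ?U"
    using p x by blast
  ultimately show ?thesis
    using homeomorphic_map_fst_graph[OF t] homeomorphic_map_snd_graph[OF t] openin_domain t
    by (intro exI[of _ ?U]) simp
qed

end

theorem mainTheorem1:
  fixes G :: "('g, 'b) monoid_scheme" and X :: "'a topology"
    and Xs :: "'g \<Rightarrow> 'a set" and h :: "'g \<Rightarrow> 'a \<Rightarrow> 'a"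
  assumes "group G"
    and "countable (carrier G)"
    and "Hausdorff_space X"
    and "sigma_compact_in X (topspace X)"
    and "topological_partial_action G X Xs h"
    and "free_partial_action G Xs h"
    and "\<forall>t\<in>carrier G. sigma_compact_in X (Xs t)"
  shows "equiv (topspace X) (orbit_rel G Xs h) \<and>
         etale_equivalence_relation X (orbit_rel G Xs h) (orbit_rel_topology G X Xs h)"
proof -
  interpret free_top_partial_action G X Xs h
    using assms(5,6) by unfold_locales
  show ?thesis
    unfolding etale_equivalence_relation_def
    using orbit_rel_equiv topspace_orbit_rel_topology sigma_compact_orbit_rel[OF assms(2,7)]
      openin_diagonal etale_neighbourhood
    by (intro conjI ballI) simp_all
qed

end
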